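(* The sequence $\{k^2+k\}_{k=0}^{\infty}$ is a Legendre multiplier sequence.
   Context: The Legendre polynomials $\mathfrak{Le}_n(x)$ are defined by $\frac{1}{\sqrt{1-2xt+t^2}}=\sum_{k=0}^{\infty}\mathfrak{Le}_k(x)t^k$. A real sequence $\{\gamma_k\}_{k=0}^{\infty}$ is a Legendre multiplier sequence if, for every $n$ and all real $a_0,\dots,a_n$, the polynomial $\sum_{k=0}^n a_k\gamma_k\mathfrak{Le}_k(x)$ has only real zeros whenever $\sum_{k=0}^n a_k\mathfrak{Le}_k(x)$ has only real zeros. *)

theory Defs
  imports "HOL-Computational_Algebra.Polynomial" Complex_Main
begin

text \<open>Legendre polynomials, via the three-term recurrence
  (n+2) P_{n+2} = (2n+3) x P_{n+1} - (n+1) P_n, P_0 = 1, P_1 = x,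
  which is equivalent to the generating function 1/sqrt(1-2xt+t^2).\<close>
fun legendre :: "nat \<Rightarrow> real poly" where
  "legendre 0 = 1"
| "legendre (Suc 0) = [:0, 1:]"
| "legendre (Suc (Suc n)) =
     smult (1 / real (n + 2))
       (smult (real (2 * n + 3)) ([:0, 1:] * legendre (Suc n)) - smult (real (n + 1)) (legendre n))"

definition only_real_zeros :: "real poly \<Rightarrow> bool" where
  "only_real_zeros p \<longleftrightarrow>
     p = 0 \<or> (\<forall>z::complex. poly (map_poly complex_of_real p) z = 0 \<longrightarrow> Im z = 0)"

definition legendre_multiplier_sequence :: "(nat \<Rightarrow> real) \<Rightarrow> bool" where
  "legendre_multiplier_sequence \<gamma> \<longleftrightarrow>
     (\<forall>(n::nat) (a::nat \<Rightarrow> real).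
        only_real_zeros (\<Sum>k\<le>n. smult (a k) (legendre k)) \<longrightarrow>
        only_real_zeros (\<Sum>k\<le>n. smult (a k * \<gamma> k) (legendre k)))"

end

theory Submission
  imports Defs "HOL-Computational_Algebra.Fundamental_Theorem_Algebra"
begin

text \<open>The Legendre polynomials are the eigenfunctions of the differential operator
  \<open>L p = ((x\<^sup>2 - 1) p')'\<close>, with \<open>L P\<^sub>k = (k\<^sup>2 + k) P\<^sub>k\<close>. Hence multiplying the Legendre
  coefficients of \<open>p\<close> by \<open>k\<^sup>2 + k\<close> is the same as applying \<open>L\<close> to \<open>p\<close>, and \<open>L\<close> preserves
  real-rootedness: multiplication by \<open>x\<^sup>2 - 1\<close> obviously does, and differentiation does by
  the Gauss-Lucas argument: if all zeros \<open>w\<^sub>i\<close> of \<open>p\<close> are real, then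
  \<open>p'(z)/p(z) = \<Sum>\<^sub>i 1/(z - w\<^sub>i)\<close> has imaginary part of sign opposite to \<open>Im z\<close>, so it
  cannot vanish off the real line.\<close>

abbreviation of_real_poly :: "real poly \<Rightarrow> complex poly" where
  "of_real_poly \<equiv> map_poly of_real"

lemma of_real_poly_pCons: "of_real_poly (pCons c p) = pCons (of_real c) (of_real_poly p)"
  by (rule map_poly_pCons) auto

lemma of_real_poly_add: "of_real_poly (p + q) = of_real_poly p + of_real_poly q"
  by (rule poly_eqI) (simp add: coeff_map_poly)

lemma of_real_poly_smult: "of_real_poly (smult c p) = smult (of_real c) (of_real_poly p)"
  by (rule map_poly_smult) auto

lemma of_real_poly_mult: "of_real_poly (p * q) = of_real_poly p * of_real_poly q"
  by (induction p) (auto simp: of_real_poly_add of_real_poly_smult of_real_poly_pCons)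

lemma of_real_poly_pderiv: "of_real_poly (pderiv p) = pderiv (of_real_poly p)"
  by (rule poly_eqI) (simp add: coeff_map_poly coeff_pderiv)

lemma degree_of_real_poly: "degree (of_real_poly p) = degree p"
  by (rule degree_map_poly) auto

lemma pderiv_sum: "pderiv (sum f A) = (\<Sum>x\<in>A. pderiv (f x))"
  by (induction A rule: infinite_finite_induct) (simp_all add: pderiv_add)

lemma logarithmic_derivative_mult:
  fixes p q :: "'a::field poly"
  assumes "poly p z \<noteq> 0" "poly q z \<noteq> 0"
  shows "poly (pderiv (p * q)) z / poly (p * q) z
           = poly (pderiv p) z / poly p z + poly (pderiv q) z / poly q z"
  using assms by (simp add: pderiv_mult field_simps)

lemma Im_inverse_linear_factor:
  fixes w z :: complex
  assumes "Im w = 0" "Im z \<noteq> 0"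
  shows "Im (1 / (z - w)) * Im z < 0"
proof -
  have "Im (1 / (z - w)) * Im z = - (Im z)\<^sup>2 / ((Re (z - w))\<^sup>2 + (Im z)\<^sup>2)"
    using assms(1) by (simp add: Im_divide power2_eq_square)
  moreover have "(Re (z - w))\<^sup>2 + (Im z)\<^sup>2 > 0"
    using assms(2) by (simp add: add_nonneg_pos)
  ultimately show ?thesis
    using assms(2) by (simp add: divide_neg_pos)
qed

lemma Im_logarithmic_derivative_real_rooted:
  fixes p :: "complex poly"
  assumes real_roots: "\<forall>w. poly p w = 0 \<longrightarrow> Im w = 0"
    and "degree p > 0" "Im z \<noteq> 0"
  shows "Im (poly (pderiv p) z / poly p z) * Im z < 0"
  using assms
proof (induction "degree p" arbitrary: p rule: less_induct)
  case less
  have "\<not> constant (poly p)"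
    using \<open>degree p > 0\<close> by (simp add: constant_degree)
  then obtain w where "poly p w = 0"
    using fundamental_theorem_of_algebra by blast
  then obtain q where p: "p = [:-w, 1:] * q"
    by (metis dvdE poly_eq_0_iff_dvd)
  have "Im w = 0"
    using \<open>poly p w = 0\<close> less.prems(1) by blast
  have "q \<noteq> 0"
    using p \<open>degree p > 0\<close> by auto
  then have degree_q: "degree q < degree p"
    unfolding p by (subst degree_mult_eq) auto
  have real_roots_q: "\<forall>u. poly q u = 0 \<longrightarrow> Im u = 0"
    using less.prems(1) by (simp add: p)
  have "poly [:-w, 1:] z \<noteq> 0" "poly q z \<noteq> 0"
    using less.prems real_roots_q by (auto simp: p)
  then have "poly (pderiv p) z / poly p z
      = poly (pderiv [:-w, 1:]) z / poly [:-w, 1:] z + poly (pderiv q) z / poly q z"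
    unfolding p by (rule logarithmic_derivative_mult)
  then have "Im (poly (pderiv p) z / poly p z) * Im z
               = Im (1 / (z - w)) * Im z + Im (poly (pderiv q) z / poly q z) * Im z"
    by (simp add: pderiv_pCons distrib_right)
  moreover have "Im (poly (pderiv q) z / poly q z) * Im z \<le> 0"
  proof (cases "degree q = 0")
    case True
    then show ?thesis by (simp add: pderiv_eq_0_iff[THEN iffD2])
  next
    case False
    then show ?thesis
      using less.hyps[OF degree_q real_roots_q] less.prems(3) by simp
  qed
  ultimately show ?case
    using Im_inverse_linear_factor[OF \<open>Im w = 0\<close> less.prems(3)] by linarith
qed

lemma only_real_zeros_pderiv:
  assumes "only_real_zeros p"
  shows "only_real_zeros (pderiv p)"
proof (cases "degree p = 0")
  case True
  then show ?thesis by (simp add: only_real_zeros_def pderiv_eq_0_iff)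
next
  case False
  then have real_roots: "\<forall>w. poly (of_real_poly p) w = 0 \<longrightarrow> Im w = 0"
    using assms by (auto simp: only_real_zeros_def)
  have "Im z = 0" if "poly (of_real_poly (pderiv p)) z = 0" for z
  proof (rule ccontr)
    assume "Im z \<noteq> 0"
    with Im_logarithmic_derivative_real_rooted[OF real_roots _ this] False that show False
      by (simp add: of_real_poly_pderiv degree_of_real_poly)
  qed
  then show ?thesis
    by (simp add: only_real_zeros_def)
qed

lemma only_real_zeros_mult:
  "only_real_zeros p \<Longrightarrow> only_real_zeros q \<Longrightarrow> only_real_zeros (p * q)"
  unfolding only_real_zeros_def by (auto simp: of_real_poly_mult)

lemma only_real_zeros_square_minus_one: "only_real_zeros [:-1, 0, 1:]"
proof -
  have "Im z = 0" if "poly (of_real_poly [:-1, 0, 1:]) z = 0" for z :: complex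
  proof -
    have "z\<^sup>2 = 1"
      using that by (simp add: of_real_poly_pCons power2_eq_square)
    then show ?thesis
      by (auto simp: power2_eq_1_iff)
  qed
  then show ?thesis
    by (simp add: only_real_zeros_def)
qed

definition legendre_operator :: "real poly \<Rightarrow> real poly" where
  "legendre_operator p = pderiv ([:-1, 0, 1:] * pderiv p)"

lemma only_real_zeros_legendre_operator:
  "only_real_zeros p \<Longrightarrow> only_real_zeros (legendre_operator p)"
  unfolding legendre_operator_def
  by (intro only_real_zeros_pderiv only_real_zeros_mult only_real_zeros_square_minus_one)

lemma legendre_operator_sum_smult:
  "legendre_operator (\<Sum>k\<in>A. smult (a k) (p k)) = (\<Sum>k\<in>A. smult (a k) (legendre_operator (p k)))"
  by (simp add: legendre_operator_def pderiv_sum sum_distrib_left pderiv_smult)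

abbreviation X :: "real poly" where "X \<equiv> [:0, 1:]"

lemma pderiv_of_nat_mult: "pderiv (of_nat n * p) = of_nat n * pderiv p"
  by (simp add: of_nat_poly pderiv_smult)

lemma pderiv_X_mult: "pderiv (X * p) = p + X * pderiv p"
  by (simp add: pderiv_mult pderiv_pCons)

lemma legendre_recurrence:
  "of_nat (n + 2) * legendre (Suc (Suc n))
     = of_nat (2 * n + 3) * (X * legendre (Suc n)) - of_nat (n + 1) * legendre n"
  by (simp add: of_nat_poly smult_diff_right)

text \<open>With \<open>d = P\<^sub>n'\<close>, \<open>d' = P\<^sub>n\<^sub>+\<^sub>1'\<close>, \<open>p = P\<^sub>n\<close>, \<open>p' = P\<^sub>n\<^sub>+\<^sub>1\<close>, this combines the two
  derivative recurrences into the first-order form \<open>(x\<^sup>2 - 1) P\<^sub>n\<^sub>+\<^sub>1' = (n + 1) (x P\<^sub>n\<^sub>+\<^sub>1 - P\<^sub>n)\<close>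
  of Legendre's equation.\<close>
lemma square_minus_one_mult_eq:
  fixes x d d' p p' c :: "'a::comm_ring_1"
  assumes "d' = x * d + c * p" "x * d' - d = c * p'"
  shows "(x * x - 1) * d' = c * (x * p' - p)"
proof -
  have "(x * x - 1) * d' = x * (x * d' - d) - (d' - x * d)"
    by (simp add: algebra_simps)
  also have "\<dots> = c * (x * p' - p)"
    using assms by (simp add: algebra_simps)
  finally show ?thesis .
qed

lemma pderiv_legendre_recurrences:
  "pderiv (legendre (Suc n)) = X * pderiv (legendre n) + of_nat (n + 1) * legendre n \<and>
   X * pderiv (legendre (Suc n)) - pderiv (legendre n) = of_nat (n + 1) * legendre (Suc n)"
proof (induction n)
  case 0
  show ?case by (simp add: pderiv_pCons)
next
  case (Suc n)
  define P0 P1 P2 where "P0 = legendre n" and "P1 = legendre (Suc n)"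
    and "P2 = legendre (Suc (Suc n))"
  define D0 D1 D2 where "D0 = pderiv P0" and "D1 = pderiv P1" and "D2 = pderiv P2"
  have A: "D1 = X * D0 + of_nat (n + 1) * P0" and B: "X * D1 - D0 = of_nat (n + 1) * P1"
    using Suc.IH unfolding D0_def D1_def P0_def P1_def by blast+
  have R: "of_nat (n + 2) * P2 = of_nat (2 * n + 3) * (X * P1) - of_nat (n + 1) * P0"
    unfolding P0_def P1_def P2_def by (rule legendre_recurrence)
  have "of_nat (n + 2) * D2 = pderiv (of_nat (2 * n + 3) * (X * P1) - of_nat (n + 1) * P0)"
    unfolding D2_def R[symmetric] by (rule pderiv_of_nat_mult[symmetric])
  also have "\<dots> = of_nat (2 * n + 3) * (P1 + X * D1) - of_nat (n + 1) * D0"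
    unfolding D0_def D1_def by (simp only: pderiv_of_nat_mult pderiv_diff pderiv_X_mult)
  also have "\<dots> = of_nat (n + 2) * (X * D1 + of_nat (n + 2) * P1)"
    using B by (simp add: algebra_simps eq_diff_eq[symmetric])
  finally have "of_nat (n + 2) * D2 = of_nat (n + 2) * (X * D1 + of_nat (n + 2) * P1)" .
  moreover have "(of_nat (n + 2) :: real poly) \<noteq> 0"
    by (simp add: of_nat_poly)
  ultimately have A': "D2 = X * D1 + of_nat (n + 2) * P1"
    by simp
  have "X * D2 - D1 = (X * X - 1) * D1 + of_nat (n + 2) * (X * P1)"
    unfolding A' by (simp add: algebra_simps)
  also have "\<dots> = of_nat (n + 2) * P2"
    unfolding square_minus_one_mult_eq[OF A B] R by (simp add: algebra_simps)
  finally have B': "X * D2 - D1 = of_nat (Suc n + 1) * P2"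
    by simp
  from A' B' show ?case
    by (simp only: P1_def P2_def D1_def D2_def Suc_eq_plus1 add_2_eq_Suc')
qed

lemma legendre_operator_legendre:
  "legendre_operator (legendre n) = smult (real n ^ 2 + real n) (legendre n)"
proof (cases n)
  case 0
  then show ?thesis by (simp add: legendre_operator_def)
next
  case (Suc m)
  define P0 P1 where "P0 = legendre m" and "P1 = legendre (Suc m)"
  define D0 D1 where "D0 = pderiv P0" and "D1 = pderiv P1"
  have A: "D1 = X * D0 + of_nat (m + 1) * P0" and B: "X * D1 - D0 = of_nat (m + 1) * P1"
    using pderiv_legendre_recurrences[of m] unfolding D0_def D1_def P0_def P1_def by blast+
  have "[:-1, 0, 1:] = X * X - (1 :: real poly)"
    by (simp add: one_pCons)
  then have "legendre_operator P1 = pderiv ((X * X - 1) * D1)"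
    by (simp only: legendre_operator_def D1_def)
  also have "\<dots> = pderiv (of_nat (m + 1) * (X * P1 - P0))"
    unfolding square_minus_one_mult_eq[OF A B] ..
  also have "\<dots> = of_nat (m + 1) * (P1 + (X * D1 - D0))"
    unfolding D0_def D1_def by (simp only: pderiv_of_nat_mult pderiv_diff pderiv_X_mult add_diff_eq)
  also have "\<dots> = of_nat ((m + 1) * (m + 2)) * P1"
    unfolding B by (simp add: algebra_simps)
  also have "\<dots> = smult (real n ^ 2 + real n) P1"
    using Suc by (simp add: of_nat_poly power2_eq_square algebra_simps)
  finally show ?thesis
    using Suc by (simp add: P1_def)
qed

theorem lemma4p6:
  shows "legendre_multiplier_sequence (\<lambda>k. real k ^ 2 + real k)"
  unfolding legendre_multiplier_sequence_def
proof (intro allI impI)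
  fix n :: nat and a :: "nat \<Rightarrow> real"
  assume "only_real_zeros (\<Sum>k\<le>n. smult (a k) (legendre k))"
  then have "only_real_zeros (legendre_operator (\<Sum>k\<le>n. smult (a k) (legendre k)))"
    by (rule only_real_zeros_legendre_operator)
  then show "only_real_zeros (\<Sum>k\<le>n. smult (a k * (real k ^ 2 + real k)) (legendre k))"
    by (simp add: legendre_operator_sum_smult legendre_operator_legendre)
qed

end
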